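(* Let $f:\mathbb{R}^2\to\mathbb{R}^2$ be a homeomorphism having an asymptotically stable fixed point $p$ whose basin of attraction $\{x\in\mathbb{R}^2: f^n(x)\to p \text{ as } n\to+\infty\}$ is all of $\mathbb{R}^2$. Then $f$ satisfies the topological shadowing property.
   Context: A fixed point $p$ of $f$ is asymptotically stable if it is Lyapunov stable (for every neighborhood $V$ of $p$ there is a neighborhood $V'$ of $p$ with $f^n(V')\subset V$ for all $n\ge0$) and attracting (there is a neighborhood $V$ of $p$ with $f^n(x)\to p$ for all $x\in V$). Let $\mathcal{C}^+=\{\epsilon:\mathbb{R}^2\to\mathbb{R}^+ : \epsilon \text{ continuous}\}$. For $\delta\in\mathcal{C}^+$, a sequence $\{x_n\}_{n\in\mathbb{Z}}$ is a $\delta$-pseudo-orbit of $f$ if $d(f(x_n),x_{n+1})<\delta(f(x_n))$ for every $n\in\mathbb{Z}$. For $\epsilon\in\mathcal{C}^+$, the sequence $\{x_n\}$ is $\epsilon$-shadowed by an orbit if there is $y$ with $d(f^n(y),x_n)<\epsilon(x_n)$ for every $n\in\mathbb{Z}$. The homeomorphism $f$ satisfies the topological shadowing property if for every $\epsilon\in\mathcal{C}^+$ there exists $\delta\in\mathcal{C}^+$ such that every $\delta$-pseudo-orbit is $\epsilon$-shadowed by an orbit. $\mathbb{R}^2$ carries the Euclidean metric $d$. *)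

theory Defs
  imports "HOL-Analysis.Analysis"
begin

type_synonym R2 = "real ^ 2"

definition is_homeo :: "(R2 \<Rightarrow> R2) \<Rightarrow> bool" where
  "is_homeo f \<longleftrightarrow> (\<exists>g. homeomorphism UNIV UNIV f g)"

definition iter_int :: "(R2 \<Rightarrow> R2) \<Rightarrow> int \<Rightarrow> R2 \<Rightarrow> R2" where
  "iter_int f n = (if n \<ge> 0 then f ^^ nat n else (inv f) ^^ nat (- n))"

definition lyapunov_stable :: "(R2 \<Rightarrow> R2) \<Rightarrow> R2 \<Rightarrow> bool" where
  "lyapunov_stable f p \<longleftrightarrow>
     (\<forall>V. open V \<and> p \<in> V \<longrightarrow>
        (\<exists>V'. open V' \<and> p \<in> V' \<and> (\<forall>n::nat. (f ^^ n) ` V' \<subseteq> V)))"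

definition attracting :: "(R2 \<Rightarrow> R2) \<Rightarrow> R2 \<Rightarrow> bool" where
  "attracting f p \<longleftrightarrow>
     (\<exists>V. open V \<and> p \<in> V \<and> (\<forall>x\<in>V. (\<lambda>n. (f ^^ n) x) \<longlonglongrightarrow> p))"

definition asymptotically_stable :: "(R2 \<Rightarrow> R2) \<Rightarrow> R2 \<Rightarrow> bool" where
  "asymptotically_stable f p \<longleftrightarrow> f p = p \<and> lyapunov_stable f p \<and> attracting f p"

definition basin :: "(R2 \<Rightarrow> R2) \<Rightarrow> R2 \<Rightarrow> R2 set" where
  "basin f p = {x. (\<lambda>n. (f ^^ n) x) \<longlonglongrightarrow> p}"

definition Cplus :: "(R2 \<Rightarrow> real) set" where
  "Cplus = {\<epsilon>. continuous_on UNIV \<epsilon> \<and> (\<forall>x. \<epsilon> x > 0)}"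

definition pseudo_orbit :: "(R2 \<Rightarrow> R2) \<Rightarrow> (R2 \<Rightarrow> real) \<Rightarrow> (int \<Rightarrow> R2) \<Rightarrow> bool" where
  "pseudo_orbit f \<delta> xs \<longleftrightarrow> (\<forall>n. dist (f (xs n)) (xs (n + 1)) < \<delta> (f (xs n)))"

definition shadowed :: "(R2 \<Rightarrow> R2) \<Rightarrow> (R2 \<Rightarrow> real) \<Rightarrow> (int \<Rightarrow> R2) \<Rightarrow> bool" where
  "shadowed f \<epsilon> xs \<longleftrightarrow> (\<exists>y. \<forall>n. dist (iter_int f n y) (xs n) < \<epsilon> (xs n))"

definition topological_shadowing :: "(R2 \<Rightarrow> R2) \<Rightarrow> bool" where
  "topological_shadowing f \<longleftrightarrow>
     (\<forall>\<epsilon>\<in>Cplus. \<exists>\<delta>\<in>Cplus. \<forall>xs. pseudo_orbit f \<delta> xs \<longrightarrow> shadowed f \<epsilon> xs)"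

end

theory Submission
  imports Defs
begin

text \<open>Because \<open>p\<close> is Lyapunov stable and attracts every point, orbits converge to \<open>p\<close> locally
  uniformly, and \<open>lyap x = sup n. (2 - 1/(n + 1)) |f\<^sup>n x - p|\<close> is a continuous, proper Lyapunov
  function that strictly decreases off \<open>p\<close>. A pseudo-orbit whose errors are small compared with this
  decrease (which is bounded below on compact sets away from \<open>p\<close>) enters a small sublevel set
  \<open>{lyap < r}\<close> at a first time \<open>T\<close> and stays there, so after \<open>T\<close> it stays close to any orbit near
  \<open>p\<close>. Before \<open>T\<close>, the gaps between the true orbits of consecutive points are paid for by the
  increase of \<open>\<Phi> \<circ> lyap\<close> for a suitable decreasing \<open>\<Phi>\<close>; they telescope, and a limit point of the
  points \<open>f\<^sup>k x\<^sub>T\<^sub>-\<^sub>k\<close> shadows the pseudo-orbit up to time \<open>T\<close>.\<close>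

lemma uniformly_continuous_near_cball:
  fixes h :: "'a::heine_borel \<Rightarrow> 'b::metric_space"
  assumes "continuous_on UNIV h" "e > 0"
  shows "\<exists>\<rho>>0. \<forall>x x'. dist p x \<le> R \<longrightarrow> dist x x' < \<rho> \<longrightarrow> dist (h x) (h x') < e"
proof -
  have "uniformly_continuous_on (cball p (R + 1)) h"
    by (rule compact_uniformly_continuous[OF continuous_on_subset[OF assms(1)]]) auto
  then obtain d where d: "d > 0"
    "\<And>x x'. x \<in> cball p (R + 1) \<Longrightarrow> x' \<in> cball p (R + 1) \<Longrightarrow> dist x' x < d \<Longrightarrow> dist (h x') (h x) < e"
    using assms(2) unfolding uniformly_continuous_on_def by metis
  show ?thesis
  proof (intro exI[of _ "min 1 d"] conjI allI impI)
    fix x x' assume x: "dist p x \<le> R" "dist x x' < min 1 d"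
    then have "dist p x' \<le> R + 1"
      using dist_triangle[of p x' x] by (simp add: dist_commute)
    then show "dist (h x) (h x') < e"
      using d(2)[of x' x] x by (simp add: dist_commute)
  qed (use d in auto)
qed

lemma uniformly_continuous_near_cball_finite_family:
  fixes F :: "nat \<Rightarrow> 'a::heine_borel \<Rightarrow> 'b::metric_space"
  assumes "\<And>k. continuous_on UNIV (F k)" "e > 0"
  shows "\<exists>\<rho>>0. \<forall>k<M. \<forall>x x'. dist p x \<le> R \<longrightarrow> dist x x' < \<rho> \<longrightarrow> dist (F k x) (F k x') < e"
proof (induction M)
  case 0
  show ?case by (intro exI[of _ 1]) auto
next
  case (Suc M)
  then obtain \<rho>1 where \<rho>1: "\<rho>1 > 0"
    "\<forall>k<M. \<forall>x x'. dist p x \<le> R \<longrightarrow> dist x x' < \<rho>1 \<longrightarrow> dist (F k x) (F k x') < e"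
    by blast
  obtain \<rho>2 where \<rho>2: "\<rho>2 > 0"
    "\<forall>x x'. dist p x \<le> R \<longrightarrow> dist x x' < \<rho>2 \<longrightarrow> dist (F M x) (F M x') < e"
    using uniformly_continuous_near_cball[OF assms] by blast
  show ?case
    by (rule exI[of _ "min \<rho>1 \<rho>2"]) (use \<rho>1 \<rho>2 less_Suc_eq in auto)
qed

lemma compact_positive_lower_bound:
  fixes \<eta> :: "'a::topological_space \<Rightarrow> real"
  assumes "compact S" "continuous_on S \<eta>" "\<And>x. x \<in> S \<Longrightarrow> \<eta> x > 0"
  shows "\<exists>m>0. \<forall>x\<in>S. m \<le> \<eta> x"
proof (cases "S = {}")
  case False
  then obtain x0 where "x0 \<in> S" "\<And>x. x \<in> S \<Longrightarrow> \<eta> x0 \<le> \<eta> x"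
    using continuous_attains_inf[OF assms(1) _ assms(2)] by blast
  then show ?thesis using assms(3) by blast
qed (auto intro: exI[of _ 1])

text \<open>A continuous, non-increasing, positive minorant of \<open>v \<mapsto> c \<lfloor>v\<rfloor>\<close>: each
  \<open>v \<mapsto> c n + max 0 (n - v)\<close> is 1-Lipschitz, and only finitely many of them matter below any bound.\<close>
definition inf_envelope :: "(nat \<Rightarrow> real) \<Rightarrow> real \<Rightarrow> real" where
  "inf_envelope c v = (INF n. c n + max 0 (real n - v))"

context
  fixes c :: "nat \<Rightarrow> real"
  assumes c_pos: "\<And>n. c n > 0"
begin

lemma inf_envelope_le: "inf_envelope c v \<le> c n + max 0 (real n - v)"
  unfolding inf_envelope_def
  by (rule cINF_lower) (auto intro!: bdd_belowI[of _ 0] less_imp_le[OF add_pos_nonneg[OF c_pos]])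

lemma inf_envelope_greatest: "(\<And>n. m \<le> c n + max 0 (real n - v)) \<Longrightarrow> m \<le> inf_envelope c v"
  unfolding inf_envelope_def by (rule cINF_greatest) auto

lemma inf_envelope_le_floor: "v \<ge> 0 \<Longrightarrow> inf_envelope c v \<le> c (nat \<lfloor>v\<rfloor>)"
  using inf_envelope_le[of v "nat \<lfloor>v\<rfloor>"] by simp

lemma inf_envelope_antimono: "u \<le> v \<Longrightarrow> inf_envelope c v \<le> inf_envelope c u"
proof (rule inf_envelope_greatest)
  fix n assume "u \<le> v"
  then show "inf_envelope c v \<le> c n + max 0 (real n - u)"
    using inf_envelope_le[of v n] by linarith
qed

lemma inf_envelope_pos: "inf_envelope c v > 0"
proof -
  define K where "K = nat \<lceil>v\<rceil> + 1"
  define m where "m = min 1 (Min (c ` {..K}))"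
  have "m > 0" unfolding m_def using c_pos by (simp add: Min_gr_iff)
  moreover have "m \<le> c n + max 0 (real n - v)" for n
  proof (cases "n \<le> K")
    case True
    then have "m \<le> c n" unfolding m_def by (simp add: min.coboundedI2)
    then show ?thesis by linarith
  next
    case False
    then have "1 \<le> max 0 (real n - v)" unfolding K_def by linarith
    then show ?thesis unfolding m_def using c_pos[of n] by linarith
  qed
  ultimately show ?thesis using inf_envelope_greatest[of m v] by simp
qed

lemma continuous_inf_envelope: "continuous_on UNIV (inf_envelope c)"
proof -
  have lipschitz: "inf_envelope c u \<le> inf_envelope c v + \<bar>u - v\<bar>" for u v
  proof -
    have "inf_envelope c u - \<bar>u - v\<bar> \<le> c n + max 0 (real n - v)" for n
      using inf_envelope_le[of u n] by linarith
    then show ?thesis using inf_envelope_greatest[of "inf_envelope c u - \<bar>u - v\<bar>" v] by simp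
  qed
  have "1-lipschitz_on UNIV (inf_envelope c)"
  proof (rule lipschitz_onI)
    fix u v show "dist (inf_envelope c u) (inf_envelope c v) \<le> 1 * dist u v"
      using lipschitz[of u v] lipschitz[of v u] by (simp add: dist_real_def abs_minus_commute)
  qed simp
  then show ?thesis by (rule lipschitz_on_continuous_on)
qed

end

lemma continuous_modulus_of_locally_uniform_family:
  fixes F :: "'i \<Rightarrow> 'a::heine_borel \<Rightarrow> 'b::metric_space" and p :: 'a
  assumes uniform: "\<And>R e. e > 0 \<Longrightarrow>
      \<exists>\<rho>>0. \<forall>x x'. dist p x \<le> R \<longrightarrow> dist x x' < \<rho> \<longrightarrow> (\<forall>k. dist (F k x) (F k x') < e)"
    and \<eta>_cont: "continuous_on UNIV \<eta>" and \<eta>_pos: "\<And>x. \<eta> x > 0"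
  shows "\<exists>\<delta>. continuous_on UNIV \<delta> \<and> (\<forall>x. \<delta> x > 0) \<and>
    (\<forall>w w' k. dist w w' < \<delta> w \<longrightarrow> dist (F k w) (F k w') < \<eta> w)"
proof -
  have "\<exists>m>0. \<forall>x\<in>cball p (real n + 1). m \<le> \<eta> x" for n :: nat
    using compact_positive_lower_bound[OF compact_cball continuous_on_subset[OF \<eta>_cont subset_UNIV] \<eta>_pos] .
  then obtain m where m_pos: "\<And>n. m n > 0"
    and m_le: "\<And>n x. x \<in> cball p (real n + 1) \<Longrightarrow> m n \<le> \<eta> x"
    by metis
  have "\<exists>\<rho>>0. \<forall>x x'. dist p x \<le> real n + 1 \<longrightarrow> dist x x' < \<rho> \<longrightarrow> (\<forall>k. dist (F k x) (F k x') < m n)"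
    for n using uniform[OF m_pos] .
  then obtain \<rho> where \<rho>_pos: "\<And>n. \<rho> n > 0" and
    \<rho>: "\<And>n x x' k. dist p x \<le> real n + 1 \<Longrightarrow> dist x x' < \<rho> n \<Longrightarrow> dist (F k x) (F k x') < m n"
    by metis
  define \<delta> where "\<delta> w = inf_envelope \<rho> (dist p w)" for w
  have "continuous_on UNIV \<delta>"
    unfolding \<delta>_def
    by (intro continuous_on_compose2[OF continuous_inf_envelope[of \<rho>, OF \<rho>_pos]] continuous_intros) auto
  moreover have "dist (F k w) (F k w') < \<eta> w" if "dist w w' < \<delta> w" for w w' k
  proof -
    define n where "n = nat \<lfloor>dist p w\<rfloor>"
    have n: "dist p w \<le> real n + 1" unfolding n_def by linarith
    have "\<delta> w \<le> \<rho> n" unfolding \<delta>_def n_def using inf_envelope_le_floor[of \<rho>, OF \<rho>_pos] by simp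
    then have "dist (F k w) (F k w') < m n" using \<rho>[OF n] that by simp
    also have "m n \<le> \<eta> w" using m_le n by (simp add: dist_commute)
    finally show ?thesis .
  qed
  ultimately show ?thesis using inf_envelope_pos[of \<rho>, OF \<rho>_pos] unfolding \<delta>_def by blast
qed

lemma continuous_exceeds_near:
  fixes \<epsilon> :: "'a::metric_space \<Rightarrow> real"
  assumes "continuous_on UNIV \<epsilon>" "\<epsilon> p > 0"
  shows "\<exists>r>0. \<forall>z. dist z p < r \<longrightarrow> 3 * r < \<epsilon> z"
proof -
  obtain d where d: "d > 0" "\<And>z. dist z p < d \<Longrightarrow> dist (\<epsilon> z) (\<epsilon> p) < \<epsilon> p / 2"
    using assms unfolding continuous_on_iff by (metis UNIV_I half_gt_zero)
  have "3 * min d (\<epsilon> p / 6) < \<epsilon> z" if "dist z p < min d (\<epsilon> p / 6)" for z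
  proof -
    have "dist (\<epsilon> z) (\<epsilon> p) < \<epsilon> p / 2" using d(2) that by simp
    then have "\<epsilon> p / 2 < \<epsilon> z" unfolding dist_real_def by arith
    then show ?thesis using min.cobounded2[of d "\<epsilon> p / 6"] by linarith
  qed
  then show ?thesis using d(1) assms(2) by (intro exI[of _ "min d (\<epsilon> p / 6)"]) auto
qed

lemma max_of_null_sequence:
  fixes t :: "nat \<Rightarrow> real"
  assumes "t \<longlonglongrightarrow> 0" "t k > 0"
  obtains m where "\<And>n. t n \<le> t m"
proof -
  obtain N where N: "\<And>n. n \<ge> N \<Longrightarrow> t n < t k"
    using LIMSEQ_D[OF assms] by (metis diff_zero real_norm_def abs_less_iff)
  have "Max (t ` {..max N k}) \<in> t ` {..max N k}"
    by (intro Max_in) auto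
  then obtain m where m: "t m = Max (t ` {..max N k})" by (metis imageE)
  have "t n \<le> t m" for n
  proof (cases "n \<le> max N k")
    case True
    then show ?thesis unfolding m by (intro Max_ge) auto
  next
    case False
    then have "t n < t k" using N by simp
    also have "t k \<le> t m" unfolding m by (intro Max_ge) auto
    finally show ?thesis by simp
  qed
  then show ?thesis by (rule that)
qed

lemma int_upward_closed_cases:
  fixes P :: "int \<Rightarrow> bool"
  assumes step: "\<And>i. P i \<Longrightarrow> P (i + 1)" and unbounded: "\<And>N. \<exists>n\<ge>N. P n"
  obtains "\<forall>n. P n" | T where "\<And>i. i < T \<Longrightarrow> \<not> P i" "\<And>n. T \<le> n \<Longrightarrow> P n"
proof -
  have up: "P n" if "P m" "m \<le> n" for m n
    using that(2,1) by (induction n rule: int_ge_induct) (auto intro: step)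
  show ?thesis
  proof (cases "\<forall>N. \<exists>n\<le>N. P n")
    case True
    then show ?thesis using that(1) up by blast
  next
    case False
    then obtain N where N: "\<And>n. n \<le> N \<Longrightarrow> \<not> P n" by (metis not_le)
    obtain n where "n \<ge> N" "P n" using unbounded by blast
    then have "P (N + int (nat (n - N)))" by simp
    then have ex: "\<exists>k::nat. P (N + int k)" ..
    define K where "K = (LEAST k::nat. P (N + int k))"
    have "\<not> P i" if "i < N + int K" for i
    proof (cases "i \<le> N")
      case False
      then have "nat (i - N) < K" "i = N + int (nat (i - N))" using that by auto
      then show ?thesis using not_less_Least[of "nat (i - N)" "\<lambda>k. P (N + int k)"] unfolding K_def by simp
    qed (use N in blast)
    moreover have "P (N + int K)" unfolding K_def using ex by (rule LeastI_ex)
    ultimately show ?thesis using that(2)[of "N + int K"] up by blast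
  qed
qed

lemma telescoping_orbit_gaps:
  fixes f :: "'a::metric_space \<Rightarrow> 'a" and xs :: "int \<Rightarrow> 'a" and a :: "int \<Rightarrow> real"
  assumes gap: "\<And>i k. i < T \<Longrightarrow> dist ((f ^^ Suc k) (xs i)) ((f ^^ k) (xs (i + 1))) \<le> a (i + 1) - a i"
    and "m \<le> T"
  shows "dist ((f ^^ k) (xs (m - int k))) (xs m) \<le> a m - a (m - int k)"
proof (induction k)
  case (Suc k)
  define i where "i = m - int (Suc k)"
  have i: "i + 1 = m - int k" "i < T" using \<open>m \<le> T\<close> unfolding i_def by auto
  have "dist ((f ^^ Suc k) (xs i)) (xs m)
      \<le> dist ((f ^^ Suc k) (xs i)) ((f ^^ k) (xs (i + 1))) + dist ((f ^^ k) (xs (i + 1))) (xs m)"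
    by (rule dist_triangle)
  also have "\<dots> \<le> a m - a i"
    using gap[OF i(2), of k] Suc unfolding i(1) by simp
  finally show ?case unfolding i_def .
qed simp

locale global_attractor =
  fixes f g :: "R2 \<Rightarrow> R2" and p :: R2
  assumes homeo: "homeomorphism UNIV UNIV f g"
    and fixed: "f p = p"
    and stable: "lyapunov_stable f p"
    and attracts: "\<And>x. (\<lambda>n. (f ^^ n) x) \<longlonglongrightarrow> p"
begin

lemma g_f [simp]: "g (f x) = x" and f_g [simp]: "f (g x) = x"
  using homeo unfolding homeomorphism_def by auto

lemma continuous_f: "continuous_on UNIV f" and continuous_g: "continuous_on UNIV g"
  using homeo unfolding homeomorphism_def by auto

lemma g_fixed [simp]: "g p = p"
  using g_f[of p] fixed by simp

lemma inverse_ne_fixed: "w \<noteq> p \<Longrightarrow> g w \<noteq> p"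
  by (metis f_g fixed)

lemma iterate_fixed [simp]: "(f ^^ n) p = p"
  by (induction n) (auto simp: fixed)

lemma iterate_inverse_fixed [simp]: "(g ^^ n) p = p"
  by (induction n) auto

lemma continuous_iterate: "continuous_on UNIV (f ^^ n)"
  by (induction n) (auto intro: continuous_on_compose2[OF continuous_f])

lemma continuous_iterate_inverse: "continuous_on UNIV (g ^^ n)"
  by (induction n) (auto intro: continuous_on_compose2[OF continuous_g])

lemma inverse_iterate_iterate [simp]: "(g ^^ n) ((f ^^ n) x) = x"
  by (induction n arbitrary: x) (simp_all add: funpow_swap1)

lemma inv_f: "inv f = g"
  by (metis g_f f_g inv_equality ext)

lemma iter_int_succ: "iter_int f (n + 1) x = f (iter_int f n x)"
proof (cases "n \<ge> 0")
  case True
  then have "nat (n + 1) = Suc (nat n)" by simp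
  with True show ?thesis unfolding iter_int_def by simp
next
  case False
  then have "nat (- n) = Suc (nat (- (n + 1)))" by simp
  with False show ?thesis unfolding iter_int_def inv_f by simp
qed

lemma iter_int_pred: "iter_int f (n - 1) x = g (iter_int f n x)"
  using iter_int_succ[of "n - 1" x] by simp

lemma iter_int_add: "iter_int f a (iter_int f b x) = iter_int f (a + b) x"
proof (induction a rule: int_induct[where k = 0])
  case base
  show ?case by (simp add: iter_int_def)
next
  case (step1 a)
  have "a + 1 + b = (a + b) + 1" by simp
  then show ?case using step1 iter_int_succ by metis
next
  case (step2 a)
  have "a - 1 + b = (a + b) - 1" by simp
  then show ?case using step2 iter_int_pred by metis
qed

lemma iter_int_nonneg: "n \<ge> 0 \<Longrightarrow> iter_int f n = f ^^ nat n"
  by (simp add: iter_int_def)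

lemma iter_int_nonpos: "n \<le> 0 \<Longrightarrow> iter_int f n = g ^^ nat (- n)"
  by (cases "n = 0") (simp_all add: iter_int_def inv_f)

lemma iter_int_fixed: "iter_int f n p = p"
  by (simp add: iter_int_def inv_f)

lemma stable_ball:
  assumes "r > 0"
  obtains U where "open U" "p \<in> U" "\<forall>n. (f ^^ n) ` U \<subseteq> ball p r"
  using stable assms unfolding lyapunov_stable_def by (meson centre_in_ball open_ball)

lemma uniform_attraction:
  assumes "compact C" "r > 0"
  shows "\<exists>N. \<forall>n\<ge>N. \<forall>x\<in>C. dist ((f ^^ n) x) p < r"
proof -
  obtain U where U: "open U" "p \<in> U" "\<forall>n. (f ^^ n) ` U \<subseteq> ball p r"
    using stable_ball[OF assms(2)] by blast
  have cover: "C \<subseteq> (\<Union>m. (f ^^ m) -` U)"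
  proof
    fix x
    have "eventually (\<lambda>n. (f ^^ n) x \<in> U) sequentially"
      using attracts[of x] U(1,2) by (simp add: tendsto_def)
    then obtain n where "(f ^^ n) x \<in> U" by (auto simp: eventually_sequentially)
    then show "x \<in> (\<Union>m. (f ^^ m) -` U)" by blast
  qed
  have "open ((f ^^ m) -` U)" for m
    using open_vimage[OF U(1) continuous_iterate] .
  then obtain M where M: "finite M" "C \<subseteq> (\<Union>m\<in>M. (f ^^ m) -` U)"
    using compactE_image[OF assms(1) _ cover] by metis
  have "dist ((f ^^ n) x) p < r" if n: "n \<ge> Sup M" and x: "x \<in> C" for n x
  proof -
    obtain m where m: "m \<in> M" "(f ^^ m) x \<in> U" using M x by blast
    then have "m \<le> n" using M(1) n by (meson le_cSup_finite order_trans)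
    then have "(f ^^ n) x = (f ^^ (n - m)) ((f ^^ m) x)"
      by (metis funpow_add le_add_diff_inverse2 o_apply)
    then show ?thesis using U(3)[rule_format, of "n - m"] m(2) by (auto simp: dist_commute)
  qed
  then show ?thesis by blast
qed

lemma iterates_equicontinuous_near_cball:
  assumes "e > 0"
  shows "\<exists>\<rho>>0. \<forall>x x'. dist p x \<le> R \<longrightarrow> dist x x' < \<rho> \<longrightarrow> (\<forall>k. dist ((f ^^ k) x) ((f ^^ k) x') < e)"
proof -
  have "e / 2 > 0" using assms by simp
  then obtain U where U: "open U" "p \<in> U" "\<forall>n. (f ^^ n) ` U \<subseteq> ball p (e / 2)"
    by (rule stable_ball)
  obtain s where s: "s > 0" "ball p s \<subseteq> U"
    using U(1,2) open_contains_ball by blast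
  obtain N where N: "\<forall>n\<ge>N. \<forall>x\<in>cball p (R + 1). dist ((f ^^ n) x) p < s"
    using uniform_attraction[OF compact_cball s(1)] by blast
  have late: "dist ((f ^^ k) x) p < e / 2" if "k \<ge> N" "x \<in> cball p (R + 1)" for k x
  proof -
    have "(f ^^ N) x \<in> U" using N that(2) s(2) by (auto simp: dist_commute)
    moreover have "(f ^^ k) x = (f ^^ (k - N)) ((f ^^ N) x)"
      using that(1) by (metis funpow_add le_add_diff_inverse2 o_apply)
    ultimately show ?thesis using U(3)[rule_format, of "k - N"] by (auto simp: dist_commute)
  qed
  obtain \<rho> where \<rho>: "\<rho> > 0"
    "\<forall>k<N. \<forall>x x'. dist p x \<le> R \<longrightarrow> dist x x' < \<rho> \<longrightarrow> dist ((f ^^ k) x) ((f ^^ k) x') < e"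
    using uniformly_continuous_near_cball_finite_family[of "\<lambda>k. f ^^ k", OF continuous_iterate assms] by blast
  show ?thesis
  proof (intro exI[of _ "min 1 \<rho>"] conjI allI impI)
    fix x x' k assume x: "dist p x \<le> R" "dist x x' < min 1 \<rho>"
    show "dist ((f ^^ k) x) ((f ^^ k) x') < e"
    proof (cases "k < N")
      case False
      have "dist p x' \<le> R + 1" using dist_triangle[of p x' x] x by (simp add: dist_commute)
      then have "dist ((f ^^ k) x') p < e / 2" "dist ((f ^^ k) x) p < e / 2"
        using late False x(1) by auto
      then show ?thesis
        using dist_triangle[of "(f ^^ k) x" "(f ^^ k) x'" p] by (simp add: dist_commute)
    qed (use \<rho> x in auto)
  qed (use \<rho> in auto)
qed

section \<open>A Lyapunov function\<close>

text \<open>The weights \<open>2 - 1/(n + 1)\<close> increase strictly, which makes \<open>lyap\<close> drop strictly along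
  orbits: the supremum for \<open>f x\<close> is attained at some \<open>m\<close> and is beaten by term \<open>m + 1\<close> for \<open>x\<close>.\<close>
definition lyap_term :: "R2 \<Rightarrow> nat \<Rightarrow> real" where
  "lyap_term x n = (2 - 1 / (real n + 1)) * dist ((f ^^ n) x) p"

definition lyap :: "R2 \<Rightarrow> real" where
  "lyap x = (SUP n. lyap_term x n)"

lemma dist_le_lyap_term: "dist ((f ^^ n) x) p \<le> lyap_term x n"
proof -
  have "1 / (real n + 1) \<le> 1" by (simp add: divide_le_eq)
  then show ?thesis unfolding lyap_term_def
    using mult_right_mono[of 1 "2 - 1 / (real n + 1)" "dist ((f ^^ n) x) p"] by simp
qed

lemma lyap_term_le: "lyap_term x n \<le> 2 * dist ((f ^^ n) x) p"
  unfolding lyap_term_def by (intro mult_right_mono) auto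

lemma orbit_dist_tendsto_zero: "(\<lambda>n. dist ((f ^^ n) x) p) \<longlonglongrightarrow> 0"
  using tendsto_dist[OF attracts tendsto_const[of p]] by simp

lemma bdd_above_lyap_term: "bdd_above (range (lyap_term x))"
proof -
  obtain K where K: "\<And>n. norm (dist ((f ^^ n) x) p) \<le> K"
    using convergent_imp_Bseq[OF convergentI[OF orbit_dist_tendsto_zero]] unfolding Bseq_def by blast
  show ?thesis
  proof (rule bdd_aboveI[of _ "2 * K"])
    fix t assume "t \<in> range (lyap_term x)"
    then obtain n where "t = lyap_term x n" by auto
    then show "t \<le> 2 * K" using lyap_term_le[of x n] K[of n] by simp
  qed
qed

lemma lyap_term_le_lyap: "lyap_term x n \<le> lyap x"
  unfolding lyap_def by (rule cSup_upper[OF _ bdd_above_lyap_term]) auto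

lemma lyap_le: "(\<And>n. lyap_term x n \<le> c) \<Longrightarrow> lyap x \<le> c"
  unfolding lyap_def by (rule cSup_least) auto

lemma dist_le_lyap: "dist x p \<le> lyap x"
  using dist_le_lyap_term[of 0 x] lyap_term_le_lyap[of x 0] by simp

lemma lyap_nonneg: "lyap x \<ge> 0"
  using dist_le_lyap[of x] zero_le_dist order_trans by blast

lemma lyap_fixed [simp]: "lyap p = 0"
  using lyap_le[of p 0] lyap_nonneg[of p] unfolding lyap_term_def by simp

lemma continuous_lyap: "continuous_on UNIV lyap"
  unfolding continuous_on_iff
proof (intro ballI allI impI)
  fix x0 :: R2 and e :: real assume e: "e > 0"
  have "e / 8 > 0" using e by simp
  then obtain N where N: "\<forall>n\<ge>N. \<forall>x\<in>cball x0 1. dist ((f ^^ n) x) p < e / 8"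
    using uniform_attraction[OF compact_cball] by blast
  have "continuous_on UNIV (\<lambda>x. lyap_term x n)" for n
    unfolding lyap_term_def by (intro continuous_intros continuous_on_compose2[OF _ continuous_iterate]) auto
  then have "\<exists>\<rho>>0. \<forall>n<Suc N. \<forall>y y'. dist x0 y \<le> 0 \<longrightarrow> dist y y' < \<rho> \<longrightarrow>
      dist (lyap_term y n) (lyap_term y' n) < e / 4"
    using e by (intro uniformly_continuous_near_cball_finite_family) auto
  then obtain \<rho> where \<rho>: "\<rho> > 0"
    "\<forall>n<Suc N. \<forall>y y'. dist x0 y \<le> 0 \<longrightarrow> dist y y' < \<rho> \<longrightarrow> dist (lyap_term y n) (lyap_term y' n) < e / 4"
    by blast
  have compare: "lyap y \<le> lyap z + e / 4"
    if y: "y \<in> cball x0 1" and close: "\<And>n. n \<le> N \<Longrightarrow> dist (lyap_term y n) (lyap_term z n) < e / 4"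
    for y z
  proof (rule lyap_le)
    fix n show "lyap_term y n \<le> lyap z + e / 4"
    proof (cases "n \<le> N")
      case True
      then have "lyap_term y n < lyap_term z n + e / 4"
        using close[OF True] unfolding dist_real_def by linarith
      then show ?thesis using lyap_term_le_lyap[of z n] by simp
    next
      case False
      then have "dist ((f ^^ n) y) p < e / 8" using N y by simp
      then show ?thesis using lyap_term_le[of y n] lyap_nonneg[of z] by linarith
    qed
  qed
  show "\<exists>d>0. \<forall>x\<in>UNIV. dist x x0 < d \<longrightarrow> dist (lyap x) (lyap x0) < e"
  proof (intro exI[of _ "min 1 \<rho>"] conjI ballI impI)
    fix x assume x: "dist x x0 < min 1 \<rho>"
    have close: "dist (lyap_term x0 n) (lyap_term x n) < e / 4" if "n \<le> N" for n
      using \<rho>(2)[rule_format, of n x0 x] that x by (simp add: dist_commute)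
    have "x \<in> cball x0 1" "x0 \<in> cball x0 1" using x by (auto simp: dist_commute)
    then have "lyap x \<le> lyap x0 + e / 4" "lyap x0 \<le> lyap x + e / 4"
      using close by (auto intro!: compare simp: dist_commute)
    then show "dist (lyap x) (lyap x0) < e" using e by (simp add: dist_real_def)
  qed (use \<rho> in auto)
qed

lemma lyap_strict_decrease:
  assumes "x \<noteq> p"
  shows "lyap (f x) < lyap x"
proof -
  define t where "t = lyap_term (f x)"
  have "t \<longlonglongrightarrow> 0"
  proof (rule tendsto_sandwich[of "\<lambda>_. 0" t _ "\<lambda>n. 2 * dist ((f ^^ n) (f x)) p"])
    show "\<forall>\<^sub>F n in sequentially. 0 \<le> t n"
      unfolding t_def by (intro always_eventually allI order_trans[OF zero_le_dist dist_le_lyap_term])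
    show "\<forall>\<^sub>F n in sequentially. t n \<le> 2 * dist ((f ^^ n) (f x)) p"
      unfolding t_def by (intro always_eventually allI lyap_term_le)
    show "(\<lambda>n. 2 * dist ((f ^^ n) (f x)) p) \<longlonglongrightarrow> 0"
      using tendsto_mult_right_zero[OF orbit_dist_tendsto_zero] .
  qed simp
  moreover have "f x \<noteq> p" by (metis assms g_f g_fixed)
  then have "t 0 > 0" unfolding t_def lyap_term_def by simp
  ultimately obtain m where m: "\<And>n. t n \<le> t m"
    using max_of_null_sequence by metis
  have "lyap (f x) = t m"
    unfolding lyap_def t_def by (rule cSup_eq_maximum) (use m t_def in auto)
  also have "t m < lyap_term x (Suc m)"
  proof -
    have t_m: "t m = (2 - 1 / (real m + 1)) * dist ((f ^^ Suc m) x) p"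
      unfolding t_def lyap_term_def by (simp add: funpow_swap1)
    then have "dist ((f ^^ Suc m) x) p > 0" using m[of 0] \<open>t 0 > 0\<close> by auto
    moreover have "1 / (real (Suc m) + 1) < 1 / (real m + 1)" by (simp add: frac_less2)
    ultimately show ?thesis unfolding t_m lyap_term_def by (intro mult_strict_right_mono) auto
  qed
  also have "\<dots> \<le> lyap x" by (rule lyap_term_le_lyap)
  finally show ?thesis .
qed

lemma lyap_decrease: "lyap (f x) \<le> lyap x"
  by (cases "x = p") (auto simp: fixed intro: less_imp_le lyap_strict_decrease)

lemma lyap_iterate_le: "lyap ((f ^^ n) x) \<le> lyap x"
  by (induction n) (auto intro: order_trans[OF lyap_decrease])

lemma compact_lyap_sublevel: "compact {x. lyap x \<le> c}"
proof -
  have "{x. lyap x \<le> c} \<subseteq> cball p c"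
  proof
    fix x assume "x \<in> {x. lyap x \<le> c}"
    then show "x \<in> cball p c" using dist_le_lyap[of x] by (simp add: dist_commute)
  qed
  then have "bounded {x. lyap x \<le> c}"
    using bounded_subset by blast
  moreover have "closed {x. lyap x \<le> c}"
    by (intro closed_Collect_le continuous_lyap continuous_on_const)
  ultimately show ?thesis by (simp add: compact_eq_bounded_closed)
qed

definition lyap_drop :: "R2 \<Rightarrow> real" where
  "lyap_drop x = lyap x - lyap (f x)"

lemma lyap_drop_nonneg: "lyap_drop x \<ge> 0"
  using lyap_decrease[of x] unfolding lyap_drop_def by simp

lemma lyap_drop_pos: "x \<noteq> p \<Longrightarrow> lyap_drop x > 0"
  using lyap_strict_decrease unfolding lyap_drop_def by simp

lemma continuous_lyap_drop: "continuous_on UNIV lyap_drop"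
  unfolding lyap_drop_def
  by (intro continuous_intros continuous_lyap continuous_on_compose2[OF continuous_lyap continuous_f]) auto

text \<open>\<open>\<Phi> \<circ> lyap\<close> will bound the accumulated error of a pseudo-orbit: as \<open>\<Phi>\<close> decreases strictly,
  every drop of \<open>lyap\<close> frees a positive amount of it.\<close>
lemma exists_decreasing_gauge:
  assumes \<eta>_cont: "continuous_on UNIV \<eta>" and \<eta>_pos: "\<And>x. \<eta> x > 0"
  shows "\<exists>\<Phi>::real \<Rightarrow> real. continuous_on UNIV \<Phi> \<and> (\<forall>v. \<Phi> v > 0) \<and>
    (\<forall>u v. u < v \<longrightarrow> \<Phi> v < \<Phi> u) \<and> (\<forall>x. \<Phi> (lyap x) \<le> \<eta> x)"
proof -
  have "\<exists>b>0. \<forall>x. lyap x \<le> real n + 1 \<longrightarrow> b \<le> \<eta> x" for n :: nat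
    using compact_positive_lower_bound[OF compact_lyap_sublevel continuous_on_subset[OF \<eta>_cont subset_UNIV] \<eta>_pos]
    by simp
  then obtain b where b_pos: "\<And>n. b n > 0" and b_le: "\<And>n x. lyap x \<le> real n + 1 \<Longrightarrow> b n \<le> \<eta> x"
    by metis
  define \<psi> where "\<psi> = inf_envelope b"
  have \<psi>: "continuous_on UNIV \<psi>" "\<And>v. \<psi> v > 0"
    "\<And>u v. u \<le> v \<Longrightarrow> \<psi> v \<le> \<psi> u" "\<And>v. v \<ge> 0 \<Longrightarrow> \<psi> v \<le> b (nat \<lfloor>v\<rfloor>)"
    unfolding \<psi>_def using b_pos
    by (auto intro: continuous_inf_envelope inf_envelope_pos inf_envelope_antimono inf_envelope_le_floor)
  define \<Phi> where "\<Phi> v = exp (- v) * \<psi> v" for v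
  have "continuous_on UNIV \<Phi>"
    unfolding \<Phi>_def by (intro continuous_intros \<psi>(1))
  moreover have "\<Phi> v > 0" for v
    unfolding \<Phi>_def using \<psi>(2) by simp
  moreover have "\<Phi> v < \<Phi> u" if "u < v" for u v
  proof -
    have "exp (- v) * \<psi> v < exp (- u) * \<psi> v" using that \<psi>(2) by simp
    also have "\<dots> \<le> exp (- u) * \<psi> u" using \<psi>(3) that by simp
    finally show ?thesis unfolding \<Phi>_def .
  qed
  moreover have "\<Phi> (lyap x) \<le> \<eta> x" for x
  proof -
    have "\<Phi> (lyap x) \<le> \<psi> (lyap x)"
      unfolding \<Phi>_def using \<psi>(2)[of "lyap x"] lyap_nonneg[of x] by (simp add: mult_le_cancel_right1)
    also have "\<dots> \<le> b (nat \<lfloor>lyap x\<rfloor>)" using \<psi>(4) lyap_nonneg by blast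
    also have "\<dots> \<le> \<eta> x" using lyap_nonneg[of x] by (intro b_le) linarith
    finally show ?thesis .
  qed
  ultimately show ?thesis by blast
qed

section \<open>Pseudo-orbits controlled by the Lyapunov function\<close>

definition lyap_step :: "real \<Rightarrow> R2 \<Rightarrow> R2 \<Rightarrow> bool" where
  "lyap_step r x x' \<longleftrightarrow>
     lyap x' < 3 * r / 4 \<or> (r / 2 \<le> lyap (f x) \<and> lyap x' \<le> lyap x - lyap_drop x / 2)"

lemma lyap_step_trap: "lyap_step r x x' \<Longrightarrow> lyap x < r \<Longrightarrow> lyap x' < r"
  using lyap_nonneg[of x] lyap_drop_nonneg[of x] unfolding lyap_step_def by linarith

lemma lyap_steps_enter:
  fixes xs :: "int \<Rightarrow> R2" and N :: int
  assumes r: "r > 0" and steps: "\<And>i. lyap_step r (xs i) (xs (i + 1))"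
  shows "\<exists>n\<ge>N. lyap (xs n) < r"
proof (rule ccontr)
  assume "\<not> ?thesis"
  then have far: "r \<le> lyap (xs (N + int k))" for k by (simp add: not_less)
  define M where "M = lyap (xs N)"
  define S where "S = {x. r / 2 \<le> lyap x} \<inter> {x. lyap x \<le> M}"
  have "compact S"
    unfolding S_def
    by (intro closed_Int_compact closed_Collect_le compact_lyap_sublevel continuous_lyap continuous_on_const)
  moreover have "lyap_drop x > 0" if "x \<in> S" for x
    using that r unfolding S_def by (intro lyap_drop_pos) auto
  ultimately obtain \<gamma> where \<gamma>: "\<gamma> > 0" "\<forall>x\<in>S. \<gamma> \<le> lyap_drop x"
    using compact_positive_lower_bound continuous_on_subset[OF continuous_lyap_drop subset_UNIV] by blast
  have descent: "lyap (xs (N + int k)) \<le> M - real k * \<gamma> / 2" for k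
  proof (induction k)
    case (Suc k)
    define i where "i = N + int k"
    have "r \<le> lyap (xs (i + 1))" using far[of "Suc k"] unfolding i_def by (simp add: ac_simps)
    then have "\<not> lyap (xs (i + 1)) < 3 * r / 4" using r by simp
    then have "lyap (xs (i + 1)) \<le> lyap (xs i) - lyap_drop (xs i) / 2"
      using steps[of i] unfolding lyap_step_def by blast
    moreover have "0 \<le> real k * \<gamma> / 2" using \<gamma>(1) by simp
    then have "xs i \<in> S" using far[of k] r Suc unfolding i_def S_def by simp
    then have "\<gamma> \<le> lyap_drop (xs i)" using \<gamma>(2) by blast
    moreover have "real (Suc k) * \<gamma> / 2 = real k * \<gamma> / 2 + \<gamma> / 2" by (simp add: algebra_simps)
    ultimately have "lyap (xs (i + 1)) \<le> M - real (Suc k) * \<gamma> / 2"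
      using Suc unfolding i_def by linarith
    then show ?case unfolding i_def by (simp add: ac_simps)
  qed (simp add: M_def)
  define k where "k = nat \<lceil>2 * M / \<gamma>\<rceil> + 1"
  have "2 * M / \<gamma> < real k" unfolding k_def by linarith
  then have "M - real k * \<gamma> / 2 < 0" using \<gamma>(1) by (simp add: divide_less_eq mult.commute)
  then show False using descent[of k] far[of k] r by linarith
qed

lemma backward_orbit_limit:
  fixes xs :: "int \<Rightarrow> R2" and T :: int
  assumes close: "\<And>j k. dist ((f ^^ k) (xs (T - int j - int k))) (xs (T - int j)) \<le> b (T - int j)"
  shows "\<exists>l. \<forall>j. dist ((g ^^ j) l) (xs (T - int j)) \<le> b (T - int j)"
proof -
  define ys where "ys k = (f ^^ k) (xs (T - int k))" for k
  have ys_split: "(g ^^ j) (ys (j + k)) = (f ^^ k) (xs (T - int j - int k))" for j k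
    unfolding ys_def by (simp add: funpow_add diff_diff_add)
  have "ys k \<in> cball (xs T) (b T)" for k
    using close[where j = 0 and k = k] unfolding ys_def mem_cball by (simp add: dist_commute)
  then obtain l \<sigma> where \<sigma>: "strict_mono \<sigma>" "(ys \<circ> \<sigma>) \<longlonglongrightarrow> l"
    using seq_compactE[OF compact_imp_seq_compact[OF compact_cball]] by metis
  have "dist ((g ^^ j) l) (xs (T - int j)) \<le> b (T - int j)" for j
  proof (rule LIMSEQ_le_const2)
    show "(\<lambda>m. dist ((g ^^ j) (ys (\<sigma> m))) (xs (T - int j))) \<longlonglongrightarrow> dist ((g ^^ j) l) (xs (T - int j))"
      using continuous_on_tendsto_compose[OF continuous_iterate_inverse \<sigma>(2)]
      by (intro tendsto_dist tendsto_const) (simp_all add: o_def)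
    show "\<exists>N. \<forall>m\<ge>N. dist ((g ^^ j) (ys (\<sigma> m))) (xs (T - int j)) \<le> b (T - int j)"
    proof (intro exI allI impI)
      fix m assume "m \<ge> j"
      then have "\<sigma> m = j + (\<sigma> m - j)" using seq_suble[OF \<sigma>(1), of m] by linarith
      then show "dist ((g ^^ j) (ys (\<sigma> m))) (xs (T - int j)) \<le> b (T - int j)"
        using close ys_split by metis
    qed
  qed
  then show ?thesis by blast
qed

text \<open>The second clause makes the gaps between the true orbits of consecutive points of a pseudo-orbit
  telescope against the increase of \<open>\<Phi> \<circ> lyap\<close> as long as it stays outside \<open>{lyap < r}\<close>.\<close>
definition lyap_controlled :: "real \<Rightarrow> (real \<Rightarrow> real) \<Rightarrow> (int \<Rightarrow> R2) \<Rightarrow> bool" where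
  "lyap_controlled r \<Phi> xs \<longleftrightarrow> (\<forall>i. lyap_step r (xs i) (xs (i + 1))) \<and>
     (\<forall>i k. r \<le> lyap (xs i) \<longrightarrow>
        dist ((f ^^ Suc k) (xs i)) ((f ^^ k) (xs (i + 1))) \<le> \<Phi> (lyap (xs (i + 1))) - \<Phi> (lyap (xs i)))"

lemma backward_shadowing_before_entry:
  fixes xs :: "int \<Rightarrow> R2"
  assumes \<Phi>_pos: "\<And>v. \<Phi> v > 0"
    and before: "\<And>i. i < T \<Longrightarrow> r \<le> lyap (xs i)"
    and gaps: "\<And>i k. r \<le> lyap (xs i) \<Longrightarrow>
      dist ((f ^^ Suc k) (xs i)) ((f ^^ k) (xs (i + 1))) \<le> \<Phi> (lyap (xs (i + 1))) - \<Phi> (lyap (xs i))"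
  shows "\<exists>l. \<forall>j. dist ((g ^^ j) l) (xs (T - int j)) \<le> \<Phi> (lyap (xs (T - int j)))"
proof (rule backward_orbit_limit)
  fix j k
  define a where "a n = \<Phi> (lyap (xs n))" for n
  have "dist ((f ^^ k) (xs (m - int k))) (xs m) \<le> a m - a (m - int k)" if "m \<le> T" for m
    by (rule telescoping_orbit_gaps[OF _ that]) (use before gaps in \<open>simp add: a_def\<close>)
  from this[of "T - int j"]
  show "dist ((f ^^ k) (xs (T - int j - int k))) (xs (T - int j)) \<le> \<Phi> (lyap (xs (T - int j)))"
    using \<Phi>_pos[of "lyap (xs (T - int j - int k))"] unfolding a_def by simp
qed

lemma shadowed_if_enters_at:
  fixes xs :: "int \<Rightarrow> R2"
  assumes near: "\<And>z. dist z p < r \<Longrightarrow> 3 * r < \<epsilon> z" and \<Phi>_lt: "\<And>x. \<Phi> (lyap x) < \<epsilon> x"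
    and jump: "\<And>x x'. lyap x < r \<Longrightarrow> dist x x' \<le> \<Phi> (lyap x) \<Longrightarrow> lyap x' < 2 * r"
    and after: "\<And>n. T \<le> n \<Longrightarrow> lyap (xs n) < r"
    and backward: "\<And>j. dist ((g ^^ j) l) (xs (T - int j)) \<le> \<Phi> (lyap (xs (T - int j)))"
  shows "shadowed f \<epsilon> xs"
proof -
  have "lyap l < 2 * r"
    using jump[of "xs T" l] after[of T] backward[of 0] by (simp add: dist_commute)
  define y where "y = iter_int f (- T) l"
  have "dist (iter_int f n y) (xs n) < \<epsilon> (xs n)" for n
  proof (cases "n \<le> T")
    case True
    have "iter_int f n y = (g ^^ nat (T - n)) l"
      unfolding y_def iter_int_add using True by (simp add: iter_int_nonpos)
    moreover have "T - int (nat (T - n)) = n" using True by simp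
    ultimately have "dist (iter_int f n y) (xs n) \<le> \<Phi> (lyap (xs n))" using backward[of "nat (T - n)"] by simp
    then show ?thesis using \<Phi>_lt[of "xs n"] by linarith
  next
    case False
    have "iter_int f n y = (f ^^ nat (n - T)) l"
      unfolding y_def iter_int_add using False by (simp add: iter_int_nonneg)
    moreover have "dist ((f ^^ nat (n - T)) l) p < 2 * r"
      using lyap_iterate_le dist_le_lyap \<open>lyap l < 2 * r\<close> by (meson le_less_trans)
    moreover have "dist (xs n) p < r"
      using False after[of n] dist_le_lyap[of "xs n"] by linarith
    ultimately have "dist (iter_int f n y) (xs n) < 3 * r"
      using dist_triangle[of "iter_int f n y" "xs n" p] by (simp add: dist_commute)
    then show ?thesis using near[OF \<open>dist (xs n) p < r\<close>] by linarith
  qed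
  then show ?thesis unfolding shadowed_def by blast
qed

lemma shadowed_if_lyap_controlled:
  fixes xs :: "int \<Rightarrow> R2"
  assumes r: "r > 0"
    and near: "\<And>z. dist z p < r \<Longrightarrow> 3 * r < \<epsilon> z"
    and \<Phi>_pos: "\<And>v. \<Phi> v > 0" and \<Phi>_lt: "\<And>x. \<Phi> (lyap x) < \<epsilon> x"
    and jump: "\<And>x x'. lyap x < r \<Longrightarrow> dist x x' \<le> \<Phi> (lyap x) \<Longrightarrow> lyap x' < 2 * r"
    and controlled: "lyap_controlled r \<Phi> xs"
  shows "shadowed f \<epsilon> xs"
proof (rule int_upward_closed_cases[of "\<lambda>n. lyap (xs n) < r"])
  have steps: "\<And>i. lyap_step r (xs i) (xs (i + 1))"
    using controlled unfolding lyap_controlled_def by blast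
  show "lyap (xs i) < r \<Longrightarrow> lyap (xs (i + 1)) < r" for i
    using lyap_step_trap steps by blast
  show "\<exists>n\<ge>N. lyap (xs n) < r" for N
    using lyap_steps_enter[of r xs, OF r steps] .
next
  assume "\<forall>n. lyap (xs n) < r"
  then have "dist (xs n) p < r" for n
    using dist_le_lyap[of "xs n"] le_less_trans by blast
  then have "dist (iter_int f n p) (xs n) < \<epsilon> (xs n)" for n
    using near[of "xs n"] r unfolding iter_int_fixed by (smt (verit) dist_commute)
  then show ?thesis unfolding shadowed_def by blast
next
  fix T assume "\<And>i. i < T \<Longrightarrow> \<not> lyap (xs i) < r" and after: "\<And>n. T \<le> n \<Longrightarrow> lyap (xs n) < r"
  then have "\<exists>l. \<forall>j. dist ((g ^^ j) l) (xs (T - int j)) \<le> \<Phi> (lyap (xs (T - int j)))"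
    using \<Phi>_pos controlled unfolding lyap_controlled_def
    by (intro backward_shadowing_before_entry) (auto simp: not_less)
  then obtain l where "\<And>j. dist ((g ^^ j) l) (xs (T - int j)) \<le> \<Phi> (lyap (xs (T - int j)))"
    by blast
  then show ?thesis
    by (intro shadowed_if_enters_at[where r = r and T = T and \<Phi> = \<Phi>] near \<Phi>_lt jump after)
qed

section \<open>Small errors give controlled pseudo-orbits\<close>

lemma lyap_step_tolerance:
  assumes r: "r > 0"
  shows "\<exists>\<beta>\<in>Cplus. \<forall>x x'. dist (lyap (f x)) (lyap x') < \<beta> (f x) \<longrightarrow> lyap_step r x x'"
proof -
  define \<beta> where "\<beta> w = min (r / 4) (max (lyap_drop (g w) / 2) (r / 2 - lyap w))" for w
  have "continuous_on UNIV \<beta>"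
    unfolding \<beta>_def
    by (intro continuous_intros continuous_lyap continuous_on_compose2[OF continuous_lyap_drop continuous_g]) auto
  moreover have "\<beta> w > 0" for w
  proof (cases "lyap w < r / 2")
    case False
    then have "g w \<noteq> p" using r by (intro inverse_ne_fixed) auto
    then show ?thesis using lyap_drop_pos[of "g w"] r unfolding \<beta>_def by simp
  qed (use r in \<open>simp add: \<beta>_def\<close>)
  moreover have "lyap_step r x x'" if close: "dist (lyap (f x)) (lyap x') < \<beta> (f x)" for x x'
  proof (cases "lyap (f x) < r / 2")
    case True
    have "\<beta> (f x) \<le> r / 4" unfolding \<beta>_def by (rule min.cobounded1)
    then have "lyap x' < 3 * r / 4" using True close unfolding dist_real_def abs_less_iff by linarith
    then show ?thesis unfolding lyap_step_def by blast
  next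
    case False
    then have "\<beta> (f x) \<le> lyap_drop x / 2" unfolding \<beta>_def using lyap_drop_nonneg[of x] by simp
    moreover have "lyap x' < lyap (f x) + \<beta> (f x)"
      using close unfolding dist_real_def by (simp add: abs_less_iff)
    ultimately have "lyap x' \<le> lyap x - lyap_drop x / 2"
      unfolding lyap_drop_def by (simp add: field_simps)
    then show ?thesis using False unfolding lyap_step_def by simp
  qed
  ultimately show ?thesis unfolding Cplus_def by blast
qed

lemma orbit_gap_tolerance:
  assumes r: "r > 0" and \<Phi>_cont: "continuous_on UNIV \<Phi>" and \<Phi>_decr: "\<And>u v. u < v \<Longrightarrow> \<Phi> v < \<Phi> u"
  shows "\<exists>\<eta>\<in>Cplus. \<forall>x x'. lyap_step r x x' \<longrightarrow> r \<le> lyap x \<longrightarrow> \<eta> (f x) \<le> \<Phi> (lyap x') - \<Phi> (lyap x)"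
proof -
  have \<Phi>_anti: "\<Phi> v \<le> \<Phi> u" if "u \<le> v" for u v
    using \<Phi>_decr[of u v] that by (cases "u = v") auto
  define A where "A w = \<Phi> (lyap w + lyap_drop (g w) / 2) - \<Phi> (lyap w + lyap_drop (g w))" for w
  define c where "c = \<Phi> (3 * r / 4) - \<Phi> r"
  define \<eta> where "\<eta> w = min c (max (A w) (r / 2 - lyap w))" for w
  have c: "c > 0" unfolding c_def using \<Phi>_decr r by simp
  have A_nonneg: "A w \<ge> 0" for w
    unfolding A_def using \<Phi>_anti lyap_drop_nonneg by simp
  have "continuous_on UNIV \<eta>"
    unfolding \<eta>_def A_def
    by (intro continuous_intros continuous_lyap continuous_on_compose2[OF \<Phi>_cont]
        continuous_on_compose2[OF continuous_lyap_drop continuous_g]) auto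
  moreover have "\<eta> w > 0" for w
  proof (cases "lyap w < r / 2")
    case False
    then have "g w \<noteq> p" using r by (intro inverse_ne_fixed) auto
    then have "A w > 0" unfolding A_def using lyap_drop_pos[of "g w"] \<Phi>_decr by simp
    then show ?thesis using c unfolding \<eta>_def by simp
  qed (use c in \<open>simp add: \<eta>_def\<close>)
  moreover have "\<eta> (f x) \<le> \<Phi> (lyap x') - \<Phi> (lyap x)" if step: "lyap_step r x x'" and far: "r \<le> lyap x" for x x'
    using step unfolding lyap_step_def
  proof (elim disjE conjE)
    assume "lyap x' < 3 * r / 4"
    then have "c \<le> \<Phi> (lyap x') - \<Phi> (lyap x)"
      unfolding c_def using \<Phi>_anti[of "lyap x'" "3 * r / 4"] \<Phi>_anti[OF far] by linarith
    then show ?thesis unfolding \<eta>_def by simp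
  next
    assume "r / 2 \<le> lyap (f x)" and x': "lyap x' \<le> lyap x - lyap_drop x / 2"
    then have "\<eta> (f x) \<le> A (f x)" unfolding \<eta>_def using A_nonneg[of "f x"] by simp
    also have "A (f x) = \<Phi> (lyap x - lyap_drop x / 2) - \<Phi> (lyap x)"
    proof -
      have "lyap (f x) + lyap_drop x / 2 = lyap x - lyap_drop x / 2" "lyap (f x) + lyap_drop x = lyap x"
        unfolding lyap_drop_def by (simp_all add: field_simps)
      then show ?thesis unfolding A_def g_f by (simp only:)
    qed
    also have "\<dots> \<le> \<Phi> (lyap x') - \<Phi> (lyap x)" using \<Phi>_anti[OF x'] by simp
    finally show ?thesis .
  qed
  ultimately show ?thesis unfolding Cplus_def by blast
qed

lemma lyap_modulus:
  assumes "\<beta> \<in> Cplus"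
  shows "\<exists>\<delta>\<in>Cplus. \<forall>w w'. dist w w' < \<delta> w \<longrightarrow> dist (lyap w) (lyap w') < \<beta> w"
proof -
  have "\<exists>\<delta>. continuous_on UNIV \<delta> \<and> (\<forall>x. \<delta> x > 0) \<and>
      (\<forall>w w' k. dist w w' < \<delta> w \<longrightarrow> dist ((\<lambda>_::unit. lyap) k w) ((\<lambda>_. lyap) k w') < \<beta> w)"
    using assms uniformly_continuous_near_cball[OF continuous_lyap]
    by (intro continuous_modulus_of_locally_uniform_family) (auto simp: Cplus_def)
  then show ?thesis unfolding Cplus_def by auto
qed

lemma iterates_modulus:
  assumes "\<eta> \<in> Cplus"
  shows "\<exists>\<delta>\<in>Cplus. \<forall>w w' k. dist w w' < \<delta> w \<longrightarrow> dist ((f ^^ k) w) ((f ^^ k) w') < \<eta> w"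
proof -
  have "\<exists>\<delta>. continuous_on UNIV \<delta> \<and> (\<forall>x. \<delta> x > 0) \<and>
      (\<forall>w w' k. dist w w' < \<delta> w \<longrightarrow> dist ((f ^^ k) w) ((f ^^ k) w') < \<eta> w)"
    using assms iterates_equicontinuous_near_cball
    by (intro continuous_modulus_of_locally_uniform_family) (auto simp: Cplus_def)
  then show ?thesis unfolding Cplus_def by auto
qed

lemma pseudo_orbit_tolerance:
  assumes r: "r > 0" and \<Phi>_cont: "continuous_on UNIV \<Phi>" and \<Phi>_decr: "\<And>u v. u < v \<Longrightarrow> \<Phi> v < \<Phi> u"
  shows "\<exists>\<delta>\<in>Cplus. \<forall>xs. pseudo_orbit f \<delta> xs \<longrightarrow> lyap_controlled r \<Phi> xs"
proof -
  obtain \<beta> where \<beta>: "\<beta> \<in> Cplus" "\<forall>x x'. dist (lyap (f x)) (lyap x') < \<beta> (f x) \<longrightarrow> lyap_step r x x'"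
    using lyap_step_tolerance[OF r] by blast
  obtain \<eta> where \<eta>: "\<eta> \<in> Cplus"
    "\<forall>x x'. lyap_step r x x' \<longrightarrow> r \<le> lyap x \<longrightarrow> \<eta> (f x) \<le> \<Phi> (lyap x') - \<Phi> (lyap x)"
    using orbit_gap_tolerance[OF r \<Phi>_cont \<Phi>_decr] by blast
  obtain \<delta>1 where \<delta>1: "\<delta>1 \<in> Cplus" "\<forall>w w'. dist w w' < \<delta>1 w \<longrightarrow> dist (lyap w) (lyap w') < \<beta> w"
    using lyap_modulus[OF \<beta>(1)] by blast
  obtain \<delta>2 where \<delta>2: "\<delta>2 \<in> Cplus" "\<forall>w w' k. dist w w' < \<delta>2 w \<longrightarrow> dist ((f ^^ k) w) ((f ^^ k) w') < \<eta> w"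
    using iterates_modulus[OF \<eta>(1)] by blast
  define \<delta> where "\<delta> w = min (\<delta>1 w) (\<delta>2 w)" for w
  have "\<delta> \<in> Cplus"
    using \<delta>1(1) \<delta>2(1) unfolding Cplus_def \<delta>_def by (auto intro: continuous_intros)
  moreover have "lyap_controlled r \<Phi> xs" if "pseudo_orbit f \<delta> xs" for xs
    unfolding lyap_controlled_def
  proof (intro conjI allI impI)
    fix i
    have close: "dist (f (xs i)) (xs (i + 1)) < \<delta> (f (xs i))"
      using that unfolding pseudo_orbit_def by blast
    then show step: "lyap_step r (xs i) (xs (i + 1))"
      using \<beta>(2) \<delta>1(2) unfolding \<delta>_def by simp
    fix k assume "r \<le> lyap (xs i)"
    then have "\<eta> (f (xs i)) \<le> \<Phi> (lyap (xs (i + 1))) - \<Phi> (lyap (xs i))"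
      using \<eta>(2) step by blast
    moreover have "dist ((f ^^ k) (f (xs i))) ((f ^^ k) (xs (i + 1))) < \<eta> (f (xs i))"
      using \<delta>2(2) close unfolding \<delta>_def by simp
    ultimately show "dist ((f ^^ Suc k) (xs i)) ((f ^^ k) (xs (i + 1))) \<le> \<Phi> (lyap (xs (i + 1))) - \<Phi> (lyap (xs i))"
      by (simp add: funpow_swap1)
  qed
  ultimately show ?thesis by blast
qed

lemma exists_shadowing_gauge:
  assumes \<epsilon>: "\<epsilon> \<in> Cplus" and r: "r > 0"
  shows "\<exists>\<Phi>. continuous_on UNIV \<Phi> \<and> (\<forall>v. \<Phi> v > 0) \<and> (\<forall>u v. u < v \<longrightarrow> \<Phi> v < \<Phi> u) \<and>
    (\<forall>x. \<Phi> (lyap x) < \<epsilon> x) \<and> (\<forall>x x'. lyap x < r \<longrightarrow> dist x x' \<le> \<Phi> (lyap x) \<longrightarrow> lyap x' < 2 * r)"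
proof -
  have \<epsilon>_cont: "continuous_on UNIV \<epsilon>" and \<epsilon>_pos: "\<And>x. \<epsilon> x > 0"
    using \<epsilon> unfolding Cplus_def by auto
  obtain \<rho> where \<rho>: "\<rho> > 0" "\<forall>x x'. dist p x \<le> r \<longrightarrow> dist x x' < \<rho> \<longrightarrow> dist (lyap x) (lyap x') < r"
    using uniformly_continuous_near_cball[OF continuous_lyap r] by blast
  have "continuous_on UNIV (\<lambda>x. min (\<epsilon> x / 2) (\<rho> / 2))"
    by (intro continuous_intros \<epsilon>_cont) auto
  moreover have "min (\<epsilon> x / 2) (\<rho> / 2) > 0" for x
    using \<epsilon>_pos \<rho>(1) by simp
  ultimately obtain \<Phi> where \<Phi>: "continuous_on UNIV \<Phi>" "\<forall>v. \<Phi> v > 0" "\<forall>u v. u < v \<longrightarrow> \<Phi> v < \<Phi> u"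
    and \<Phi>_small: "\<forall>x. \<Phi> (lyap x) \<le> min (\<epsilon> x / 2) (\<rho> / 2)"
    using exists_decreasing_gauge by blast
  have "lyap x' < 2 * r" if "lyap x < r" "dist x x' \<le> \<Phi> (lyap x)" for x x'
  proof -
    have "dist p x \<le> r" "dist x x' < \<rho>"
      using dist_le_lyap[of x] that \<Phi>_small[rule_format, of x] \<rho>(1) by (auto simp: dist_commute)
    then show ?thesis using \<rho>(2) that(1) unfolding dist_real_def by force
  qed
  moreover have "\<Phi> (lyap x) < \<epsilon> x" for x
    using \<Phi>_small[rule_format, of x] \<epsilon>_pos[of x] by linarith
  ultimately show ?thesis using \<Phi> by blast
qed

theorem topological_shadowing: "topological_shadowing f"
  unfolding topological_shadowing_def
proof
  fix \<epsilon> assume \<epsilon>: "\<epsilon> \<in> Cplus"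
  then obtain r where r: "r > 0" and near: "\<And>z. dist z p < r \<Longrightarrow> 3 * r < \<epsilon> z"
    using continuous_exceeds_near[of \<epsilon> p] unfolding Cplus_def by blast
  obtain \<Phi> where \<Phi>: "continuous_on UNIV \<Phi>" "\<forall>v. \<Phi> v > 0" "\<forall>u v. u < v \<longrightarrow> \<Phi> v < \<Phi> u"
    "\<forall>x. \<Phi> (lyap x) < \<epsilon> x" "\<forall>x x'. lyap x < r \<longrightarrow> dist x x' \<le> \<Phi> (lyap x) \<longrightarrow> lyap x' < 2 * r"
    using exists_shadowing_gauge[OF \<epsilon> r] by blast
  obtain \<delta> where "\<delta> \<in> Cplus" "\<forall>xs. pseudo_orbit f \<delta> xs \<longrightarrow> lyap_controlled r \<Phi> xs"
    using pseudo_orbit_tolerance[OF r \<Phi>(1) \<Phi>(3)[rule_format]] by blast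
  moreover have "shadowed f \<epsilon> xs" if "lyap_controlled r \<Phi> xs" for xs
    using shadowed_if_lyap_controlled[where \<epsilon> = \<epsilon>, OF r near _ _ _ that] \<Phi>(2,4,5) by blast
  ultimately show "\<exists>\<delta>\<in>Cplus. \<forall>xs. pseudo_orbit f \<delta> xs \<longrightarrow> shadowed f \<epsilon> xs" by blast
qed

end

theorem mainTheorem9:
  fixes f :: "R2 \<Rightarrow> R2" and p :: R2
  assumes "is_homeo f"
    and "asymptotically_stable f p"
    and "basin f p = UNIV"
  shows "topological_shadowing f"
proof -
  obtain g where "homeomorphism UNIV UNIV f g"
    using assms(1) unfolding is_homeo_def by blast
  moreover have "f p = p" "lyapunov_stable f p"
    using assms(2) unfolding asymptotically_stable_def by auto
  moreover have "(\<lambda>n. (f ^^ n) x) \<longlonglongrightarrow> p" for x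
    using assms(3) unfolding basin_def by blast
  ultimately interpret global_attractor f g p
    by unfold_locales
  show ?thesis by (rule topological_shadowing)
qed

end
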